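(* Let $(V_1, V_2)$ be an isometric pair on $\mathcal{H}$ and let $\mathcal{W} = \ker (V_1V_2)^*$, $\mathcal{W}_i = \ker V_i^*$ ($i=1,2$). Suppose $(\ker C(V_1, V_2))^\perp = \mathcal{W}$. Then $\dim \mathcal{W}_1 = \dim \mathcal{W}_2$. In particular, if $\mathcal{W}$ is finite-dimensional, then $\dim \mathcal{W}$ is even.
   Context: All Hilbert spaces are complex and separable. An isometric pair is a pair $(V_1,V_2)$ of commuting isometries. $C(V_1,V_2) := I - V_1V_1^* - V_2V_2^* + V_1V_2V_1^*V_2^*$. *)

theory Defs
  imports "HOL-Analysis.Analysis"
begin

class complex_vector = real_vector +
  fixes scaleC :: "complex \<Rightarrow> 'a \<Rightarrow> 'a" (infixr \<open>*\<^sub>C\<close> 75)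
  assumes scaleC_add_right: "a *\<^sub>C (x + y) = a *\<^sub>C x + a *\<^sub>C y"
    and scaleC_add_left: "(a + b) *\<^sub>C x = a *\<^sub>C x + b *\<^sub>C x"
    and scaleC_scaleC: "a *\<^sub>C (b *\<^sub>C x) = (a * b) *\<^sub>C x"
    and scaleC_one: "1 *\<^sub>C x = x"
    and scaleR_scaleC: "scaleR r x = complex_of_real r *\<^sub>C x"

text \<open>Inner product, linear in the first and conjugate-linear in the second argument.\<close>
class complex_inner = complex_vector + real_normed_vector +
  fixes cinner :: "'a \<Rightarrow> 'a \<Rightarrow> complex"
  assumes cinner_commute: "cinner x y = cnj (cinner y x)"
    and cinner_add_left: "cinner (x + y) z = cinner x z + cinner y z"
    and cinner_scaleC_left: "cinner (a *\<^sub>C x) y = a * cinner x y"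
    and cinner_self_real: "Im (cinner x x) = 0"
    and cinner_self_nonneg: "0 \<le> Re (cinner x x)"
    and cinner_self_eq_zero: "cinner x x = 0 \<longleftrightarrow> x = 0"
    and norm_eq_sqrt_cinner: "norm x = sqrt (Re (cinner x x))"

text \<open>A (complex) Hilbert space is a type of sort {complex_inner, complete_space}.\<close>

definition separable_space :: "'a::topological_space itself \<Rightarrow> bool" where
  "separable_space _ \<longleftrightarrow> (\<exists>D::'a set. countable D \<and> closure D = UNIV)"

definition clinear :: "('a::complex_vector \<Rightarrow> 'b::complex_vector) \<Rightarrow> bool" where
  "clinear f \<longleftrightarrow> (\<forall>x y. f (x + y) = f x + f y) \<and> (\<forall>c x. f (c *\<^sub>C x) = c *\<^sub>C f x)"

definition bounded_clinear :: "('a::complex_inner \<Rightarrow> 'b::complex_inner) \<Rightarrow> bool" where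
  "bounded_clinear f \<longleftrightarrow> clinear f \<and> (\<exists>K. \<forall>x. norm (f x) \<le> norm x * K)"

definition is_adjoint :: "('a::complex_inner \<Rightarrow> 'a) \<Rightarrow> ('a \<Rightarrow> 'a) \<Rightarrow> bool" where
  "is_adjoint T Ts \<longleftrightarrow> (\<forall>x y. cinner (T x) y = cinner x (Ts y))"

definition isometry :: "('a::complex_inner \<Rightarrow> 'a) \<Rightarrow> bool" where
  "isometry V \<longleftrightarrow> bounded_clinear V \<and> (\<forall>x. norm (V x) = norm x)"

definition ker :: "('a \<Rightarrow> 'b::zero) \<Rightarrow> 'a set" where
  "ker T = {x. T x = 0}"

definition orth_compl :: "'a::complex_inner set \<Rightarrow> 'a set" where
  "orth_compl S = {y. \<forall>x\<in>S. cinner x y = 0}"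

definition defect_op ::
  "('a::complex_inner \<Rightarrow> 'a) \<Rightarrow> ('a \<Rightarrow> 'a) \<Rightarrow> ('a \<Rightarrow> 'a) \<Rightarrow> ('a \<Rightarrow> 'a) \<Rightarrow> 'a \<Rightarrow> 'a" where
  "defect_op V1 V1s V2 V2s x = x - V1 (V1s x) - V2 (V2s x) + V1 (V2 (V1s (V2s x)))"

definition cspan :: "'a::complex_vector set \<Rightarrow> 'a set" where
  "cspan B = {(\<Sum>b\<in>F. c b *\<^sub>C b) | F c. finite F \<and> F \<subseteq> B}"

definition is_onb :: "'a::complex_inner set \<Rightarrow> 'a set \<Rightarrow> bool" where
  "is_onb S B \<longleftrightarrow> B \<subseteq> S \<and> (\<forall>x\<in>B. cinner x x = 1)
      \<and> (\<forall>x\<in>B. \<forall>y\<in>B. x \<noteq> y \<longrightarrow> cinner x y = 0)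
      \<and> closure (cspan B) = S"

definition same_hilbert_dim :: "'a::complex_inner set \<Rightarrow> 'a set \<Rightarrow> bool" where
  "same_hilbert_dim S T \<longleftrightarrow> (\<exists>B1 B2. is_onb S B1 \<and> is_onb T B2 \<and> (\<exists>f. bij_betw f B1 B2))"

text \<open>Finite-dimensional: has a finite orthonormal basis; its dimension is its cardinality.\<close>
definition finite_dim :: "'a::complex_inner set \<Rightarrow> bool" where
  "finite_dim S \<longleftrightarrow> (\<exists>B. is_onb S B \<and> finite B)"

end

(*
  The hypothesis says exactly that ker C and W = ker (V1 V2)* meet only in 0. For x in
  W1 = ker V1* one has C x = x - V2 V2* x and (V1 V2)* x = 0, so the projection I - V2 V2*
  maps W1 injectively into W2 = ker V2*; symmetrically I - V1 V1* maps W2 injectively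
  into W1. In a separable space both kernels have countable orthonormal bases (Gram-Schmidt
  applied to a countable dense set), and injective linear maps in both directions force
  these bases to be equinumerous. Finally W is the orthogonal sum of W1 and V1 W2, so
  dim W = dim W1 + dim W2 = 2 dim W1.
*)

theory Submission
  imports Defs
begin

section \<open>Complex inner product spaces\<close>

interpretation cvs: vector_space "scaleC :: complex \<Rightarrow> 'a \<Rightarrow> 'a::complex_vector"
  by unfold_locales (simp_all add: scaleC_add_right scaleC_add_left scaleC_scaleC scaleC_one)

lemma cinner_add_right: "cinner x (y + z) = cinner x y + cinner (x::'a::complex_inner) z"
  by (metis cinner_commute cinner_add_left complex_cnj_add)

lemma cinner_scaleC_right: "cinner x (a *\<^sub>C y) = cnj a * cinner (x::'a::complex_inner) y"
  by (metis cinner_commute cinner_scaleC_left complex_cnj_mult)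

lemma cinner_zero_left [simp]: "cinner 0 (y::'a::complex_inner) = 0"
  by (metis add_cancel_right_left cinner_add_left)

lemma cinner_zero_right [simp]: "cinner (y::'a::complex_inner) 0 = 0"
  by (metis cinner_commute cinner_zero_left complex_cnj_zero)

lemma cinner_diff_left: "cinner (x - z) (y::'a::complex_inner) = cinner x y - cinner z y"
  by (metis add_diff_cancel cinner_add_left diff_add_cancel)

lemma cinner_diff_right: "cinner y (x - z::'a::complex_inner) = cinner y x - cinner y z"
  by (metis add_diff_cancel cinner_add_right diff_add_cancel)

lemma cinner_sum_left: "cinner (\<Sum>i\<in>F. f i) (y::'a::complex_inner) = (\<Sum>i\<in>F. cinner (f i) y)"
  by (induction F rule: infinite_finite_induct) (auto simp: cinner_add_left)

lemma cinner_eq_zero_sym: "cinner x y = 0 \<longleftrightarrow> cinner y (x::'a::complex_inner) = 0"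
  by (metis cinner_commute complex_cnj_zero_iff)

lemma cinner_self_eq_norm_square: "cinner x x = complex_of_real ((norm (x::'a::complex_inner))\<^sup>2)"
  using cinner_self_real[of x] cinner_self_nonneg[of x] norm_eq_sqrt_cinner[of x]
  by (simp add: complex_eq_iff)

lemma cinner_scaleR_left: "cinner (r *\<^sub>R x) y = r *\<^sub>R cinner (x::'a::complex_inner) y"
  by (simp add: scaleR_scaleC cinner_scaleC_left scaleR_conv_of_real)

lemma cinner_extensionality: "(\<And>z. cinner z a = cinner z b) \<Longrightarrow> a = (b::'a::complex_inner)"
  by (metis cinner_diff_right cinner_self_eq_zero eq_iff_diff_eq_0)

lemma Cauchy_Schwarz_cinner: "cmod (cinner x y) \<le> norm x * norm (y::'a::complex_inner)"
proof (cases "y = 0")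
  case False
  define a where "a = cinner x y"
  define R where "R = (norm y)\<^sup>2"
  have "R > 0" using False by (simp add: R_def)
  have a_cnj_a: "a * cnj a = complex_of_real ((cmod a)\<^sup>2)"
    using complex_norm_square[of a] by simp
  \<comment> \<open>expand \<open>0 \<le> \<parallel>x - t y\<parallel>\<^sup>2\<close> at the minimising \<open>t = a / R\<close>\<close>
  define t where "t = a / complex_of_real R"
  have "cinner (x - t *\<^sub>C y) (x - t *\<^sub>C y)
      = cinner x x - cnj t * a - t * cnj a + t * cnj t * complex_of_real R"
    by (simp add: cinner_diff_left cinner_diff_right cinner_scaleC_left cinner_scaleC_right
        a_def R_def cinner_self_eq_norm_square[of y] algebra_simps cinner_commute[of y x])
  also have "\<dots> = complex_of_real ((norm x)\<^sup>2 - (cmod a)\<^sup>2 / R)"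
    using \<open>R > 0\<close> by (simp add: t_def cinner_self_eq_norm_square a_cnj_a field_simps)
  finally have "0 \<le> (norm x)\<^sup>2 - (cmod a)\<^sup>2 / R"
    using cinner_self_nonneg[of "x - t *\<^sub>C y"] by simp
  then have "(cmod a)\<^sup>2 \<le> (norm x * norm y)\<^sup>2"
    using \<open>R > 0\<close> by (simp add: R_def field_simps power_mult_distrib)
  then show ?thesis unfolding a_def by (rule power2_le_imp_le) simp
qed simp

lemma bounded_linear_cinner_left: "bounded_linear (\<lambda>z. cinner z (y::'a::complex_inner))"
  by (rule bounded_linear_intro[where K = "norm y"])
    (simp_all add: cinner_add_left cinner_scaleR_left Cauchy_Schwarz_cinner)

lemma closed_orthogonal: "closed {z. cinner z (y::'a::complex_inner) = 0}"
  by (intro closed_Collect_eq continuous_on_const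
      linear_continuous_on bounded_linear_cinner_left)

section \<open>Adjoints and isometries\<close>

lemma clinear_iff_linear:
  fixes T :: "'a::complex_vector \<Rightarrow> 'b::complex_vector"
  shows "clinear T \<longleftrightarrow> Vector_Spaces.linear (*\<^sub>C) (*\<^sub>C) T"
  using cvs.vector_space_axioms[where 'a = 'a] cvs.vector_space_axioms[where 'a = 'b]
  unfolding clinear_def Vector_Spaces.linear_iff by blast

lemma bounded_clinear_imp_bounded_linear: "bounded_clinear T \<Longrightarrow> bounded_linear T"
  unfolding bounded_clinear_def clinear_def
  by (metis bounded_linear_intro scaleR_scaleC)

lemma adjoint_clinear:
  fixes T :: "'a::complex_inner \<Rightarrow> 'a"
  assumes "is_adjoint T Ts"
  shows "clinear Ts"
  unfolding clinear_def
proof safe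
  show "Ts (x + y) = Ts x + Ts y" for x y
    by (rule cinner_extensionality) (metis assms is_adjoint_def cinner_add_right)
  show "Ts (c *\<^sub>C x) = c *\<^sub>C Ts x" for c x
    by (rule cinner_extensionality) (metis assms is_adjoint_def cinner_scaleC_right)
qed

lemma adjoint_unique: "is_adjoint T A \<Longrightarrow> is_adjoint T B \<Longrightarrow> A = B"
  unfolding is_adjoint_def by (metis cinner_extensionality ext)

lemma adjoint_comp: "is_adjoint T Ts \<Longrightarrow> is_adjoint S Ss \<Longrightarrow> is_adjoint (T \<circ> S) (Ss \<circ> Ts)"
  by (simp add: is_adjoint_def)

lemma adjoint_commute:
  assumes "is_adjoint T Ts" "is_adjoint S Ss" "T \<circ> S = S \<circ> T"
  shows "Ts \<circ> Ss = Ss \<circ> Ts"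
  using adjoint_comp[OF assms(1,2)] adjoint_comp[OF assms(2,1)] assms(3)
  by (metis adjoint_unique)

lemma clinear_cinner_self_zero:
  fixes T :: "'a::complex_inner \<Rightarrow> 'a"
  assumes T: "clinear T" and zero: "\<And>x. cinner x (T x) = 0"
  shows "T y = 0"
proof -
  have sum_zero: "cinner x (T y) + cinner y (T x) = 0" for x y
    using zero[of "x + y"] zero[of x] zero[of y] T
    by (simp add: clinear_def cinner_add_left cinner_add_right)
  \<comment> \<open>replacing \<open>y\<close> by \<open>\<i> y\<close> turns the sum of the cross terms into their difference;
     this step fails over the reals\<close>
  have "cinner x (T y) = 0" for x
    using sum_zero[of x y] sum_zero[of x "\<i> *\<^sub>C y"] T
    by (simp add: clinear_def cinner_scaleC_left cinner_scaleC_right)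
  from this[of "T y"] show ?thesis by (simp add: cinner_self_eq_zero)
qed

lemma isometry_clinear: "isometry V \<Longrightarrow> clinear V"
  by (simp add: isometry_def bounded_clinear_def)

lemma isometry_adjoint_left_inverse:
  fixes V :: "'a::complex_inner \<Rightarrow> 'a"
  assumes iso: "isometry V" and adj: "is_adjoint V Vs"
  shows "Vs (V x) = x"
proof -
  have "clinear (\<lambda>x. Vs (V x) - x)"
    using adjoint_clinear[OF adj] isometry_clinear[OF iso]
    by (simp add: clinear_def algebra_simps cvs.scale_right_diff_distrib)
  moreover have "cinner x (Vs (V x) - x) = 0" for x
  proof -
    have "cinner x (Vs (V x)) = cinner (V x) (V x)"
      using adj by (simp add: is_adjoint_def)
    then show ?thesis
      using iso by (simp add: isometry_def cinner_diff_right cinner_self_eq_norm_square)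
  qed
  ultimately have "Vs (V x) - x = 0"
    by (rule clinear_cinner_self_zero)
  then show ?thesis by simp
qed

lemma cinner_isometry:
  fixes V :: "'a::complex_inner \<Rightarrow> 'a"
  assumes "isometry V" "is_adjoint V Vs"
  shows "cinner (V x) (V y) = cinner x y"
  using assms isometry_adjoint_left_inverse[OF assms] by (simp add: is_adjoint_def)

lemma isometry_adjoint_bounded_clinear:
  fixes V :: "'a::complex_inner \<Rightarrow> 'a"
  assumes iso: "isometry V" and adj: "is_adjoint V Vs"
  shows "bounded_clinear Vs"
  unfolding bounded_clinear_def
proof (intro conjI exI allI)
  show "clinear Vs" by (rule adjoint_clinear[OF adj])
  fix y
  have "(norm (Vs y))\<^sup>2 = cmod (cinner (V (Vs y)) y)"
    using adj by (simp add: is_adjoint_def cinner_self_eq_norm_square flip: of_real_power)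
  also have "\<dots> \<le> norm (Vs y) * norm y"
    using Cauchy_Schwarz_cinner[of "V (Vs y)" y] iso by (simp add: isometry_def)
  finally have "norm (Vs y) * norm (Vs y) \<le> norm (Vs y) * norm y"
    by (simp add: power2_eq_square)
  then show "norm (Vs y) \<le> norm y * 1"
    by (metis mult_le_cancel_left_pos mult.right_neutral norm_ge_zero order_le_less)
qed

section \<open>Orthonormal sets and bases\<close>

definition orthonormal :: "'a::complex_inner set \<Rightarrow> bool" where
  "orthonormal B \<longleftrightarrow> (\<forall>x\<in>B. cinner x x = 1) \<and> (\<forall>x\<in>B. \<forall>y\<in>B. x \<noteq> y \<longrightarrow> cinner x y = 0)"

lemma cspan_eq_span: "cspan B = cvs.span B"
  unfolding cspan_def cvs.span_explicit by blast

lemma is_onb_iff: "is_onb S B \<longleftrightarrow> B \<subseteq> S \<and> orthonormal B \<and> closure (cvs.span B) = S"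
  unfolding is_onb_def orthonormal_def cspan_eq_span by (simp only: conj_assoc)

lemma cinner_sum_orthonormal:
  assumes "orthonormal B" "finite F" "F \<subseteq> B" "v \<in> F"
  shows "cinner (\<Sum>w\<in>F. u w *\<^sub>C w) v = u v"
proof -
  have "cinner (\<Sum>w\<in>F. u w *\<^sub>C w) v = (\<Sum>w\<in>F. u w * cinner w v)"
    by (simp add: cinner_sum_left cinner_scaleC_left)
  also have "\<dots> = (\<Sum>w\<in>F. if w = v then u w else 0)"
    using assms unfolding orthonormal_def by (intro sum.cong) auto
  also have "\<dots> = u v"
    using assms by simp
  finally show ?thesis .
qed

lemma orthonormal_independent: "orthonormal B \<Longrightarrow> cvs.independent B"
  unfolding cvs.dependent_explicit by (metis cinner_sum_orthonormal cinner_zero_left)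

lemma orthogonal_closure_span:
  assumes "\<And>b. b \<in> B \<Longrightarrow> cinner b y = 0" "z \<in> closure (cvs.span B)"
  shows "cinner z (y::'a::complex_inner) = 0"
proof -
  have "cvs.subspace {z. cinner z y = 0}"
    unfolding cvs.subspace_def by (simp add: cinner_add_left cinner_scaleC_left)
  then have "cvs.span B \<subseteq> {z. cinner z y = 0}"
    using assms(1) by (intro cvs.span_minimal) auto
  then have "closure (cvs.span B) \<subseteq> {z. cinner z y = 0}"
    by (intro closure_minimal closed_orthogonal)
  with assms(2) show ?thesis by auto
qed

lemma mem_orth_compl_self_eq_zero: "x \<in> S \<Longrightarrow> x \<in> orth_compl S \<Longrightarrow> x = 0"
  unfolding orth_compl_def using cinner_self_eq_zero by blast

lemma cinner_residual_orthonormal: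
  assumes "orthonormal E" "finite E" "e \<in> E"
  shows "cinner (x - (\<Sum>b\<in>E. cinner x b *\<^sub>C b)) e = 0"
  using cinner_sum_orthonormal[OF assms(1,2) order.refl assms(3)]
  by (simp add: cinner_diff_left)

lemma closed_span_finite_orthonormal:
  assumes on: "orthonormal B" and fin: "finite B"
  shows "closed (cvs.span B)"
proof -
  have "x \<in> cvs.span B" if x: "x \<in> closure (cvs.span B)" for x
  proof -
    define s where "s = (\<Sum>b\<in>B. cinner x b *\<^sub>C b)"
    have s_span: "s \<in> cvs.span B"
      unfolding s_def by (intro cvs.span_sum cvs.span_scale cvs.span_base)
    have "cinner b (x - s) = 0" if "b \<in> B" for b
      using cinner_residual_orthonormal[OF on fin that] by (simp add: s_def cinner_eq_zero_sym)
    then have "cinner x (x - s) = 0" "cinner s (x - s) = 0"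
      using x s_span closure_subset by (auto intro: orthogonal_closure_span)
    then have "cinner (x - s) (x - s) = 0"
      by (simp add: cinner_diff_left)
    with s_span show ?thesis
      by (simp add: cinner_self_eq_zero)
  qed
  then show ?thesis
    by (metis closure_subset_eq subsetI)
qed

lemma finite_onb_span: "is_onb S B \<Longrightarrow> finite B \<Longrightarrow> S = cvs.span B"
  by (metis closed_span_finite_orthonormal closure_closed is_onb_iff)

lemma card_finite_onb_eq_dim: "is_onb S B \<Longrightarrow> finite B \<Longrightarrow> card B = cvs.dim S"
  by (metis cvs.basis_card_eq_dim finite_onb_span is_onb_iff orthonormal_independent order.refl)

lemma finite_onb_card_le_if_inj:
  assumes B: "is_onb S B" and B': "is_onb S' B'" "finite B'"
    and T: "clinear T" "T ` S \<subseteq> S'" "inj_on T S"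
  shows "finite B \<and> card B \<le> card B'"
proof -
  interpret T: Vector_Spaces.linear "(*\<^sub>C)" "(*\<^sub>C)" T
    using T(1) by (simp add: clinear_iff_linear)
  have "cvs.span B \<subseteq> S"
    using B closure_subset by (auto simp: is_onb_iff)
  then have "cvs.independent (T ` B)"
    using B T(3) by (intro T.independent_injective_image orthonormal_independent)
      (auto simp: is_onb_iff intro: inj_on_subset)
  moreover have "T ` B \<subseteq> cvs.span B'"
    using B T(2) finite_onb_span[OF B'] by (auto simp: is_onb_iff)
  ultimately have "finite (T ` B) \<and> card (T ` B) \<le> card B'"
    by (intro cvs.independent_span_bound B'(2))
  moreover have "inj_on T B"
    using B T(3) by (auto simp: is_onb_iff intro: inj_on_subset)
  ultimately show ?thesis
    by (simp add: finite_image_iff card_image)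
qed

lemma countable_bij_betw:
  assumes "countable A" "countable B" "finite A \<longleftrightarrow> finite B" "card A = card B"
  shows "\<exists>f. bij_betw f A B"
proof (cases "finite A")
  case True
  then show ?thesis using assms finite_same_card_bij by blast
next
  case False
  then have "bij_betw (from_nat_into B \<circ> to_nat_on A) A B"
    using assms bij_betw_trans[OF to_nat_on_infinite[of A] bij_betw_from_nat_into[of B]] by simp
  then show ?thesis by blast
qed

lemma same_hilbert_dim_if_inj:
  assumes B: "is_onb S B" "countable B" and B': "is_onb S' B'" "countable B'"
    and T: "clinear T" "T ` S \<subseteq> S'" "inj_on T S"
    and T': "clinear T'" "T' ` S' \<subseteq> S" "inj_on T' S'"
  shows "same_hilbert_dim S S'"
proof -
  note le = finite_onb_card_le_if_inj[OF B(1) B'(1) _ T] finite_onb_card_le_if_inj[OF B'(1) B(1) _ T']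
  have "finite B \<longleftrightarrow> finite B'"
    using le by auto
  moreover from this le have "card B = card B'"
    by (cases "finite B") (simp_all add: le_antisym)
  ultimately obtain f where "bij_betw f B B'"
    using countable_bij_betw[OF B(2) B'(2)] by blast
  then show ?thesis
    unfolding same_hilbert_dim_def using B(1) B'(1) by blast
qed

section \<open>Countable orthonormal bases\<close>

definition gram_schmidt_step :: "'a::complex_inner \<Rightarrow> 'a set \<Rightarrow> 'a set" where
  "gram_schmidt_step p E =
    (let r = p - (\<Sum>e\<in>E. cinner p e *\<^sub>C e)
     in if r = 0 then E else insert (complex_of_real (1 / norm r) *\<^sub>C r) E)"

primrec gram_schmidt :: "(nat \<Rightarrow> 'a::complex_inner) \<Rightarrow> nat \<Rightarrow> 'a set" where
  "gram_schmidt p 0 = {}"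
| "gram_schmidt p (Suc n) = gram_schmidt_step (p n) (gram_schmidt p n)"

lemma gram_schmidt_step_cases:
  obtains "p - (\<Sum>e\<in>E. cinner p e *\<^sub>C e) = 0" "gram_schmidt_step p E = E"
  | r where "r = p - (\<Sum>e\<in>E. cinner p e *\<^sub>C e)" "r \<noteq> 0"
      "gram_schmidt_step p E = insert (complex_of_real (1 / norm r) *\<^sub>C r) E"
  using that unfolding gram_schmidt_step_def Let_def
  by (cases "p - (\<Sum>e\<in>E. cinner p e *\<^sub>C e) = 0") auto

lemma finite_gram_schmidt_step: "finite E \<Longrightarrow> finite (gram_schmidt_step p E)"
  by (cases p E rule: gram_schmidt_step_cases) auto

lemma subset_gram_schmidt_step: "E \<subseteq> gram_schmidt_step p E"
  by (cases p E rule: gram_schmidt_step_cases) auto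

lemma in_span_gram_schmidt_step: "p \<in> cvs.span (gram_schmidt_step p E)"
proof -
  define s where "s = (\<Sum>e\<in>E. cinner p e *\<^sub>C e)"
  have "s \<in> cvs.span E"
    unfolding s_def by (intro cvs.span_sum cvs.span_scale cvs.span_base)
  then have s: "s \<in> cvs.span (gram_schmidt_step p E)"
    using cvs.span_mono[OF subset_gram_schmidt_step] by blast
  show ?thesis
  proof (cases p E rule: gram_schmidt_step_cases)
    case 1
    then show ?thesis using s by (simp add: s_def)
  next
    case (2 r)
    then have "p = s + complex_of_real (norm r) *\<^sub>C (complex_of_real (1 / norm r) *\<^sub>C r)"
      by (simp add: s_def scaleC_scaleC scaleC_one flip: of_real_mult)
    then show ?thesis
      using s 2(3) by (metis cvs.span_add cvs.span_base cvs.span_scale insertI1)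
  qed
qed

lemma gram_schmidt_step_subset_span: "gram_schmidt_step p E \<subseteq> cvs.span (insert p E)"
proof -
  have "p - (\<Sum>e\<in>E. cinner p e *\<^sub>C e) \<in> cvs.span (insert p E)"
    by (intro cvs.span_diff cvs.span_sum cvs.span_scale cvs.span_base) auto
  then show ?thesis
    by (cases p E rule: gram_schmidt_step_cases) (auto intro: cvs.span_base cvs.span_scale)
qed

lemma orthonormal_gram_schmidt_step:
  assumes fin: "finite E" and on: "orthonormal E"
  shows "orthonormal (gram_schmidt_step p E)"
proof (cases p E rule: gram_schmidt_step_cases)
  case 1
  then show ?thesis using on by simp
next
  case (2 r)
  define u where "u = complex_of_real (1 / norm r) *\<^sub>C r"
  have "cinner u u = complex_of_real (1 / norm r) * complex_of_real (1 / norm r) * cinner r r"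
    by (simp add: u_def cinner_scaleC_left cinner_scaleC_right)
  also have "\<dots> = 1"
    using 2(2) by (simp add: cinner_self_eq_norm_square power2_eq_square flip: of_real_mult)
  finally have "cinner u u = 1" .
  moreover have "cinner u e = 0" "cinner e u = 0" if "e \<in> E" for e
    using cinner_residual_orthonormal[OF on fin that, of p] 2(1)
    by (simp_all add: u_def cinner_scaleC_left cinner_eq_zero_sym[of e])
  ultimately show ?thesis
    using on 2(3) unfolding orthonormal_def u_def[symmetric] by auto
qed

lemma finite_gram_schmidt: "finite (gram_schmidt p n)"
  by (induction n) (simp_all add: finite_gram_schmidt_step)

lemma orthonormal_gram_schmidt: "orthonormal (gram_schmidt p n)"
  by (induction n)
    (simp_all add: orthonormal_gram_schmidt_step finite_gram_schmidt orthonormal_def[of "{}"])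

lemma mono_gram_schmidt: "mono (gram_schmidt p)"
  by (simp add: mono_iff_le_Suc subset_gram_schmidt_step)

lemma in_span_gram_schmidt: "p k \<in> cvs.span (gram_schmidt p (Suc k))"
  by (simp add: in_span_gram_schmidt_step)

lemma gram_schmidt_subset_span: "gram_schmidt p n \<subseteq> cvs.span (range p)"
proof (induction n)
  case (Suc n)
  then have "cvs.span (insert (p n) (gram_schmidt p n)) \<subseteq> cvs.span (range p)"
    by (intro cvs.span_minimal) (auto intro: cvs.span_base)
  then show ?case
    using gram_schmidt_step_subset_span by auto
qed simp

lemma orthonormal_UN_mono:
  fixes B :: "nat \<Rightarrow> 'a::complex_inner set"
  assumes "mono B" "\<And>n. orthonormal (B n)"
  shows "orthonormal (\<Union>n. B n)"
  unfolding orthonormal_def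
proof safe
  fix x y m n assume "x \<in> B m" "y \<in> B n" "x \<noteq> y"
  moreover have "B m \<subseteq> B (max m n)" "B n \<subseteq> B (max m n)"
    by (simp_all add: monoD[OF assms(1)])
  ultimately have "x \<in> B (max m n)" "y \<in> B (max m n)"
    by blast+
  then show "cinner x y = 0"
    using assms(2) \<open>x \<noteq> y\<close> by (simp add: orthonormal_def)
qed (use assms(2) in \<open>auto simp: orthonormal_def\<close>)

lemma countable_onb_exists:
  assumes S: "closed S" "cvs.subspace S" and D: "countable D" "D \<subseteq> S" "S \<subseteq> closure D"
  shows "\<exists>B. is_onb S B \<and> countable B"
proof -
  have "D \<noteq> {}"
    using D(3) cvs.subspace_0[OF S(2)] by auto
  define p where "p = from_nat_into D"
  have range_p: "range p = D"
    unfolding p_def using range_from_nat_into[OF \<open>D \<noteq> {}\<close> D(1)] .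
  define B where "B = (\<Union>n. gram_schmidt p n)"
  have "countable B"
    unfolding B_def by (simp add: countable_finite finite_gram_schmidt)
  moreover have "orthonormal B"
    unfolding B_def by (intro orthonormal_UN_mono mono_gram_schmidt orthonormal_gram_schmidt)
  moreover have "B \<subseteq> S"
  proof -
    have "cvs.span (range p) \<subseteq> S"
      using range_p D(2) by (simp add: cvs.span_minimal S(2))
    then show ?thesis
      using gram_schmidt_subset_span unfolding B_def by blast
  qed
  moreover have "closure (cvs.span B) \<subseteq> S"
    using closure_minimal[OF cvs.span_minimal[OF \<open>B \<subseteq> S\<close> S(2)] S(1)] .
  moreover have "S \<subseteq> closure (cvs.span B)"
  proof -
    have "gram_schmidt p (Suc k) \<subseteq> B" for k
      unfolding B_def by (rule UN_upper) simp
    then have "p k \<in> cvs.span B" for k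
      using in_span_gram_schmidt cvs.span_mono by blast
    then have "D \<subseteq> cvs.span B"
      using range_p by auto
    then show ?thesis
      using D(3) closure_mono by blast
  qed
  ultimately show ?thesis
    unfolding is_onb_iff by blast
qed

lemma countable_dense_subset_if_retract:
  fixes P :: "'a::topological_space \<Rightarrow> 'a"
  assumes sep: "separable_space TYPE('a)" and P: "continuous_on UNIV P" "range P \<subseteq> S"
    and fix_S: "\<And>x. x \<in> S \<Longrightarrow> P x = x"
  shows "\<exists>D. countable D \<and> D \<subseteq> S \<and> S \<subseteq> closure D"
proof -
  obtain D :: "'a set" where D: "countable D" "closure D = UNIV"
    using sep unfolding separable_space_def by blast
  have "S \<subseteq> P ` closure D"
  proof
    fix x assume "x \<in> S"
    then have "x = P x"
      by (simp add: fix_S)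
    then show "x \<in> P ` closure D"
      unfolding D(2) by (rule rev_image_eqI[OF UNIV_I])
  qed
  also have "\<dots> \<subseteq> closure (P ` D)"
    using continuous_image_closure_subset[OF P(1)] by simp
  finally have "S \<subseteq> closure (P ` D)" .
  moreover have "countable (P ` D)" "P ` D \<subseteq> S"
    using D(1) P(2) by auto
  ultimately show ?thesis
    by blast
qed

lemma isometry_ker_adjoint_countable_onb:
  fixes V :: "'a::complex_inner \<Rightarrow> 'a"
  assumes sep: "separable_space TYPE('a)" and iso: "isometry V" and adj: "is_adjoint V Vs"
  shows "\<exists>B. is_onb (ker Vs) B \<and> countable B"
proof -
  have V: "bounded_linear V" "clinear V"
    using iso by (simp_all add: isometry_def bounded_clinear_imp_bounded_linear isometry_clinear)
  have Vs: "bounded_linear Vs" "clinear Vs"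
    using isometry_adjoint_bounded_clinear[OF iso adj] adjoint_clinear[OF adj]
    by (simp_all add: bounded_clinear_imp_bounded_linear)
  interpret V: Vector_Spaces.linear "(*\<^sub>C)" "(*\<^sub>C)" V
    using V(2) by (simp add: clinear_iff_linear)
  interpret Vs: Vector_Spaces.linear "(*\<^sub>C)" "(*\<^sub>C)" Vs
    using Vs(2) by (simp add: clinear_iff_linear)
  have subspace: "cvs.subspace (ker Vs)"
    unfolding ker_def by (rule Vs.subspace_kernel)
  have closed: "closed (ker Vs)"
    unfolding ker_def by (intro closed_Collect_eq linear_continuous_on Vs(1) continuous_on_const)
  define P where "P x = x - V (Vs x)" for x
  have "continuous_on UNIV P"
    unfolding P_def
    by (intro linear_continuous_on bounded_linear_sub bounded_linear_ident
        bounded_linear_compose[OF V(1) Vs(1)])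
  moreover have "range P \<subseteq> ker Vs"
    by (auto simp: P_def ker_def Vs.diff isometry_adjoint_left_inverse[OF iso adj])
  moreover have "P x = x" if "x \<in> ker Vs" for x
    using that by (simp add: P_def ker_def)
  ultimately have "\<exists>D. countable D \<and> D \<subseteq> ker Vs \<and> ker Vs \<subseteq> closure D"
    by (rule countable_dense_subset_if_retract[OF sep])
  then show ?thesis
    using countable_onb_exists[OF closed subspace] by blast
qed

section \<open>Isometric pairs\<close>

locale isometric_pair =
  fixes V1 V1s V2 V2s :: "'a::complex_inner \<Rightarrow> 'a"
  assumes isometry1: "isometry V1" and isometry2: "isometry V2"
    and adjoint1: "is_adjoint V1 V1s" and adjoint2: "is_adjoint V2 V2s"
    and commute: "V1 \<circ> V2 = V2 \<circ> V1"
begin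

sublocale V1: Vector_Spaces.linear "(*\<^sub>C)" "(*\<^sub>C)" V1
  using isometry1 by (simp add: isometry_clinear flip: clinear_iff_linear)

sublocale V2: Vector_Spaces.linear "(*\<^sub>C)" "(*\<^sub>C)" V2
  using isometry2 by (simp add: isometry_clinear flip: clinear_iff_linear)

sublocale V1s: Vector_Spaces.linear "(*\<^sub>C)" "(*\<^sub>C)" V1s
  using adjoint1 by (simp add: adjoint_clinear flip: clinear_iff_linear)

sublocale V2s: Vector_Spaces.linear "(*\<^sub>C)" "(*\<^sub>C)" V2s
  using adjoint2 by (simp add: adjoint_clinear flip: clinear_iff_linear)

lemma V1s_V1 [simp]: "V1s (V1 x) = x"
  by (rule isometry_adjoint_left_inverse[OF isometry1 adjoint1])

lemma V2s_V2 [simp]: "V2s (V2 x) = x"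
  by (rule isometry_adjoint_left_inverse[OF isometry2 adjoint2])

lemma adjoints_commute: "V1s \<circ> V2s = V2s \<circ> V1s"
  by (rule adjoint_commute[OF adjoint1 adjoint2 commute])

lemma isometric_pair_swap: "isometric_pair V2 V2s V1 V1s"
  using isometry1 isometry2 adjoint1 adjoint2 commute by unfold_locales simp_all

lemma defect_op_swap: "defect_op V2 V2s V1 V1s = defect_op V1 V1s V2 V2s"
  using fun_cong[OF commute] fun_cong[OF adjoints_commute]
  by (auto simp: defect_op_def fun_eq_iff)

lemma clinear_proj_ker_V2s: "clinear (\<lambda>x. x - V2 (V2s x))"
  by (simp add: clinear_def V2.add V2s.add V2.scale V2s.scale cvs.scale_right_diff_distrib)

lemma proj_ker_V2s_in_ker: "x - V2 (V2s x) \<in> ker V2s"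
  by (simp add: ker_def V2s.diff)

lemma inj_on_proj_ker_V2s:
  assumes "ker (defect_op V1 V1s V2 V2s) \<inter> ker (V2s \<circ> V1s) \<subseteq> {0}"
  shows "inj_on (\<lambda>x. x - V2 (V2s x)) (ker V1s)"
proof -
  interpret T: Vector_Spaces.linear "(*\<^sub>C)" "(*\<^sub>C)" "\<lambda>x. x - V2 (V2s x)"
    using clinear_proj_ker_V2s by (simp add: clinear_iff_linear)
  have "x = 0" if "x \<in> ker V1s" "x - V2 (V2s x) = 0" for x
  proof -
    have "V1s x = 0" "x = V2 (V2s x)"
      using that by (simp_all add: ker_def)
    moreover have "V1s (V2s x) = 0"
      using fun_cong[OF adjoints_commute, of x] \<open>V1s x = 0\<close> by simp
    ultimately have "x \<in> ker (defect_op V1 V1s V2 V2s) \<inter> ker (V2s \<circ> V1s)"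
      by (simp add: ker_def defect_op_def)
    then show ?thesis using assms by blast
  qed
  then show ?thesis
    using T.inj_on_iff_eq_0[OF V1s.subspace_kernel] by (simp add: ker_def)
qed

lemma same_hilbert_dim_ker_adjoints:
  assumes sep: "separable_space TYPE('a)"
    and trivial: "ker (defect_op V1 V1s V2 V2s) \<inter> ker (V2s \<circ> V1s) \<subseteq> {0}"
  shows "same_hilbert_dim (ker V1s) (ker V2s)"
proof -
  obtain B1 where B1: "is_onb (ker V1s) B1" "countable B1"
    using isometry_ker_adjoint_countable_onb[OF sep isometry1 adjoint1] by blast
  obtain B2 where B2: "is_onb (ker V2s) B2" "countable B2"
    using isometry_ker_adjoint_countable_onb[OF sep isometry2 adjoint2] by blast
  have "ker (defect_op V2 V2s V1 V1s) \<inter> ker (V1s \<circ> V2s) \<subseteq> {0}"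
    using trivial by (simp add: defect_op_swap adjoints_commute)
  then have "inj_on (\<lambda>x. x - V1 (V1s x)) (ker V2s)"
    by (rule isometric_pair.inj_on_proj_ker_V2s[OF isometric_pair_swap])
  moreover have "(\<lambda>x. x - V1 (V1s x)) ` ker V2s \<subseteq> ker V1s"
    using isometric_pair.proj_ker_V2s_in_ker[OF isometric_pair_swap] by blast
  moreover have "(\<lambda>x. x - V2 (V2s x)) ` ker V1s \<subseteq> ker V2s"
    using proj_ker_V2s_in_ker by blast
  ultimately show ?thesis
    using same_hilbert_dim_if_inj[OF B1 B2 clinear_proj_ker_V2s _ inj_on_proj_ker_V2s[OF trivial]
        isometric_pair.clinear_proj_ker_V2s[OF isometric_pair_swap]]
    by blast
qed

lemma cinner_ker_V1s_V1: "x \<in> ker V1s \<Longrightarrow> cinner (V1 y) x = 0"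
  using adjoint1 by (simp add: is_adjoint_def ker_def)

lemma ker_product_adjoint_eq: "ker (V2s \<circ> V1s) = {x + V1 y |x y. x \<in> ker V1s \<and> y \<in> ker V2s}"
proof safe
  fix z assume "z \<in> ker (V2s \<circ> V1s)"
  then have "z - V1 (V1s z) \<in> ker V1s" "V1s z \<in> ker V2s"
    by (simp_all add: ker_def V1s.diff)
  then show "\<exists>x y. z = x + V1 y \<and> x \<in> ker V1s \<and> y \<in> ker V2s"
    by (metis diff_add_cancel)
qed (simp_all add: ker_def V1s.add)

lemma orthonormal_Un_image_V1:
  assumes B1: "orthonormal B1" "B1 \<subseteq> ker V1s" and B2: "orthonormal B2"
  shows "orthonormal (B1 \<union> V1 ` B2)" "B1 \<inter> V1 ` B2 = {}"
proof -
  have perp: "cinner b (V1 y) = 0" "cinner (V1 y) b = 0" if "b \<in> B1" for b y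
    using cinner_ker_V1s_V1 B1(2) that by (auto simp: cinner_eq_zero_sym[of b])
  then show "orthonormal (B1 \<union> V1 ` B2)"
    using B1(1) B2 unfolding orthonormal_def
    by (auto simp: cinner_isometry[OF isometry1 adjoint1]) (metis V1s_V1)
  show "B1 \<inter> V1 ` B2 = {}"
    using perp B1(1) unfolding orthonormal_def by force
qed

lemma card_onb_ker_product_adjoint:
  assumes B: "is_onb (ker (V2s \<circ> V1s)) B" "finite B"
    and B1: "is_onb (ker V1s) B1" and B2: "is_onb (ker V2s) B2"
  shows "finite B1 \<and> finite B2 \<and> card B = card B1 + card B2"
proof -
  define C where "C = B1 \<union> V1 ` B2"
  have C: "orthonormal C" "B1 \<inter> V1 ` B2 = {}"
    using orthonormal_Un_image_V1 B1 B2 unfolding C_def is_onb_iff by blast+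
  have W: "ker (V2s \<circ> V1s) = cvs.span B"
    by (rule finite_onb_span[OF B])
  have "C \<subseteq> ker (V2s \<circ> V1s)"
    using B1 B2 unfolding C_def is_onb_iff by (auto simp: ker_def)
  then have "finite C"
    using cvs.independent_span_bound[OF B(2) orthonormal_independent[OF C(1)]] W by simp
  moreover have "inj V1"
    by (metis V1s_V1 injI)
  ultimately have fin: "finite B1" "finite B2"
    unfolding C_def by (simp_all add: finite_image_iff inj_on_subset)
  have "ker (V2s \<circ> V1s) \<subseteq> cvs.span C"
  proof -
    have "ker V1s \<subseteq> cvs.span C" "V1 ` ker V2s \<subseteq> cvs.span C"
      using finite_onb_span[OF B1 fin(1)] finite_onb_span[OF B2 fin(2)]
        cvs.span_mono[of B1 C] cvs.span_mono[of "V1 ` B2" C] V1.span_image[of B2]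
      by (auto simp: C_def)
    then show ?thesis
      unfolding ker_product_adjoint_eq by (auto intro: cvs.span_add)
  qed
  then have "card C = card B"
    using cvs.basis_card_eq_dim[OF \<open>C \<subseteq> ker (V2s \<circ> V1s)\<close> _ orthonormal_independent[OF C(1)]]
    by (simp add: card_finite_onb_eq_dim[OF B])
  moreover have "card C = card B1 + card B2"
    using C(2) fin \<open>inj V1\<close> by (simp add: C_def card_Un_disjoint card_image inj_on_subset)
  ultimately show ?thesis
    using fin by simp
qed

end

theorem proposition3p8:
  fixes V1 V2 V1s V2s Ws :: "'a::{complex_inner, complete_space} \<Rightarrow> 'a"
  assumes sep: "separable_space TYPE('a)"
    and iso1: "isometry V1" and iso2: "isometry V2"
    and comm: "V1 \<circ> V2 = V2 \<circ> V1"
    and adj1: "is_adjoint V1 V1s" and adj2: "is_adjoint V2 V2s"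
    and adjW: "is_adjoint (V1 \<circ> V2) Ws"
    and hyp: "orth_compl (ker (defect_op V1 V1s V2 V2s)) = ker Ws"
  shows "same_hilbert_dim (ker V1s) (ker V2s)
     \<and> (finite_dim (ker Ws) \<longrightarrow> (\<forall>B. is_onb (ker Ws) B \<and> finite B \<longrightarrow> even (card B)))"
proof -
  interpret isometric_pair V1 V1s V2 V2s
    using iso1 iso2 adj1 adj2 comm by unfold_locales
  have Ws: "Ws = V2s \<circ> V1s"
    using adjoint_unique[OF adjW adjoint_comp[OF adj1 adj2]] .
  have "ker (defect_op V1 V1s V2 V2s) \<inter> ker (V2s \<circ> V1s) \<subseteq> {0}"
    using mem_orth_compl_self_eq_zero hyp unfolding Ws by blast
  then have dim: "same_hilbert_dim (ker V1s) (ker V2s)"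
    by (rule same_hilbert_dim_ker_adjoints[OF sep])
  then obtain B1 B2 f where B1: "is_onb (ker V1s) B1" and B2: "is_onb (ker V2s) B2"
    and f: "bij_betw f B1 B2"
    unfolding same_hilbert_dim_def by blast
  have "even (card B)" if "is_onb (ker Ws) B" "finite B" for B
    using card_onb_ker_product_adjoint[OF that[unfolded Ws] B1 B2] bij_betw_same_card[OF f] by simp
  with dim show ?thesis
    by blast
qed

end
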